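(* Let $X\subseteq\mathbb{R}^n$ be compact, let $U_1,U_2\subseteq\mathbb{R}^m$ be compact, let $F:X\times(U_1\cup U_2)\to X$ be continuous, let $R:X\to[0,1]$ be Lipschitz with constant $L_R$, and let $\gamma\in[0,1)$. For $i=1,2$ define the Bellman operator on bounded functions $V:X\to\mathbb{R}$ by $$(\mathcal{T}_iV)(\mathbf{x})=\max_{\mathbf{u}\in U_i}\big[R(F(\mathbf{x},\mathbf{u}))+\gamma V(F(\mathbf{x},\mathbf{u}))\big],$$ and let $V_i^*$ be its unique bounded fixed point (the optimal value function of the discounted problem with action set $U_i$). Suppose $V_1^*$ and $V_2^*$ are Lipschitz with a common Lipschitz constant $L_V$. Then $$\|V_1^*-V_2^*\|_\infty\le\frac{L_R+\gamma L_V}{1-\gamma}\,\max_{\mathbf{x}\in X} d_S\big(\mathcal{R}_F(\mathbf{x},U_1),\mathcal{R}_F(\mathbf{x},U_2)\big).$$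
   Context: The reachable set of $F$ from $\mathbf{x}$ under an action set $U$ is $\mathcal{R}_F(\mathbf{x},U)=\{F(\mathbf{x},\mathbf{u}):\mathbf{u}\in U\}$. For $a\in\mathbb{R}^n$ and $M\subseteq\mathbb{R}^n$, $d(a,M)=\inf_{m\in M}\|a-m\|$; the Hausdorff distance between $M,N\subseteq\mathbb{R}^n$ is $d_S(M,N)=\max\{\sup_{m\in M}d(m,N),\ \sup_{n\in N}d(n,M)\}$. Norms are Euclidean. *)

theory Defs
  imports "HOL-Analysis.Analysis"
begin

definition reachable_set :: "('x \<Rightarrow> 'u \<Rightarrow> 'y) \<Rightarrow> 'x \<Rightarrow> 'u set \<Rightarrow> 'y set" where
  "reachable_set F x U = {F x u | u. u \<in> U}"

definition hausdorff_dist :: "'a::metric_space set \<Rightarrow> 'a set \<Rightarrow> real" where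
  "hausdorff_dist M N = max (SUP m\<in>M. infdist m N) (SUP n\<in>N. infdist n M)"

definition bellman ::
  "('x \<Rightarrow> 'u \<Rightarrow> 'x) \<Rightarrow> ('x \<Rightarrow> real) \<Rightarrow> real \<Rightarrow> 'u set \<Rightarrow> ('x \<Rightarrow> real) \<Rightarrow> 'x \<Rightarrow> real" where
  "bellman F R \<gamma> U V x = (SUP u\<in>U. R (F x u) + \<gamma> * V (F x u))"

end

theory Submission
  imports Defs
begin

text \<open>Let M be the sup-distance of V1 and V2 and D the largest Hausdorff distance of the
reachable sets. At a state x, every action u of one set has an action v of the other set
whose successor lies within distance D of F x u (the reachable sets are compact). By
Lipschitz continuity of R and of the value functions, the Bellman summand of u under one
value function exceeds that of v under the other by at most (L_R + \<gamma> L_V) D + \<gamma> M.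
Taking suprema gives M \<le> (L_R + \<gamma> L_V) D + \<gamma> M, which rearranges to the claim.\<close>

lemma bdd_above_infdist_image:
  fixes M N :: "'a::metric_space set"
  assumes "bounded M" "N \<noteq> {}"
  shows "bdd_above ((\<lambda>m. infdist m N) ` M)"
proof -
  obtain n where n: "n \<in> N" using assms(2) by blast
  obtain e where "\<forall>m\<in>M. dist n m \<le> e" using assms(1) bounded_any_center by blast
  then have "infdist m N \<le> e" if "m \<in> M" for m
    using infdist_le2[OF n] that by (metis dist_commute)
  then show ?thesis by (intro bdd_aboveI2)
qed

lemma infdist_le_hausdorff_dist:
  fixes M N :: "'a::metric_space set"
  assumes "bounded M" "N \<noteq> {}" "m \<in> M"
  shows "infdist m N \<le> hausdorff_dist M N"
  unfolding hausdorff_dist_def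
  using cSUP_upper[OF assms(3) bdd_above_infdist_image[OF assms(1,2)]] by linarith

lemma hausdorff_dist_commute: "hausdorff_dist M N = hausdorff_dist N M"
  by (simp add: hausdorff_dist_def max.commute)

lemma hausdorff_dist_le_diameter:
  fixes M N X :: "'a::metric_space set"
  assumes X: "bounded X" and sub: "M \<subseteq> X" "N \<subseteq> X" and ne: "M \<noteq> {}" "N \<noteq> {}"
  shows "hausdorff_dist M N \<le> diameter X"
proof -
  have "infdist a B \<le> diameter X" if a: "a \<in> X" and B: "B \<subseteq> X" "B \<noteq> {}" for a B
  proof -
    obtain b where b: "b \<in> B" using B(2) by blast
    have "infdist a B \<le> dist a b" using b by (rule infdist_le)
    also have "\<dots> \<le> diameter X" using diameter_bounded_bound[OF X a] B(1) b by blast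
    finally show ?thesis .
  qed
  then show ?thesis
    unfolding hausdorff_dist_def using sub ne
    by (intro max.boundedI cSUP_least) auto
qed

lemma infdist_compact_image_attained:
  fixes f :: "'u::topological_space \<Rightarrow> 'x::heine_borel"
  assumes "compact U" "U \<noteq> {}" "continuous_on U f" "infdist y (f ` U) \<le> D"
  shows "\<exists>v\<in>U. dist y (f v) \<le> D"
proof -
  have "closed (f ` U)"
    using compact_continuous_image[OF assms(3,1)] by (rule compact_imp_closed)
  then obtain z where "z \<in> f ` U" "infdist y (f ` U) = dist y z"
    using infdist_attains_inf assms(2) by blast
  then show ?thesis using assms(4) by auto
qed

lemma hausdorff_dist_compact_image_witness:
  fixes f :: "'u::topological_space \<Rightarrow> 'x::heine_borel"
  assumes "bounded (f ` Ua)" "compact Ub" "Ub \<noteq> {}" "continuous_on Ub f"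
    and "hausdorff_dist (f ` Ua) (f ` Ub) \<le> D" "u \<in> Ua"
  shows "\<exists>v\<in>Ub. dist (f u) (f v) \<le> D"
  using infdist_le_hausdorff_dist[of "f ` Ua" "f ` Ub" "f u"] assms
  by (intro infdist_compact_image_attained[OF assms(2-4)]) auto

lemma bellman_summands_bdd_above:
  fixes R V :: "'x \<Rightarrow> real"
  assumes "\<And>u. u \<in> U \<Longrightarrow> F x u \<in> X" "bdd_above (R ` X)" "bdd_above (V ` X)" "0 \<le> \<gamma>"
  shows "bdd_above ((\<lambda>u. R (F x u) + \<gamma> * V (F x u)) ` U)"
proof -
  obtain a b where a: "\<And>y. y \<in> X \<Longrightarrow> R y \<le> a" and b: "\<And>y. y \<in> X \<Longrightarrow> V y \<le> b"
    using assms(2,3) by (auto simp: bdd_above_def)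
  have "R (F x u) + \<gamma> * V (F x u) \<le> a + \<gamma> * b" if "u \<in> U" for u
    using a[OF assms(1)[OF that]] mult_left_mono[OF b[OF assms(1)[OF that]] assms(4)]
    by linarith
  then show ?thesis by (intro bdd_aboveI2)
qed

lemma bellman_le_bellman_close_actions:
  fixes F :: "'x::metric_space \<Rightarrow> 'u \<Rightarrow> 'x"
  assumes Ua: "Ua \<noteq> {}"
    and bdd: "bdd_above ((\<lambda>v. R (F x v) + \<gamma> * Vb (F x v)) ` Ub)"
    and close: "\<And>u. u \<in> Ua \<Longrightarrow> \<exists>v\<in>Ub. dist (F x u) (F x v) \<le> D"
    and maps: "\<And>u. u \<in> Ua \<union> Ub \<Longrightarrow> F x u \<in> X"
    and R_lip: "L_R-lipschitz_on X R" and Va_lip: "L_V-lipschitz_on X Va"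
    and \<gamma>: "0 \<le> \<gamma>"
    and diff: "\<And>y. y \<in> X \<Longrightarrow> Va y - Vb y \<le> M"
  shows "bellman F R \<gamma> Ua Va x \<le> bellman F R \<gamma> Ub Vb x + ((L_R + \<gamma> * L_V) * D + \<gamma> * M)"
  unfolding bellman_def
proof (rule cSUP_least[OF Ua])
  fix u assume u: "u \<in> Ua"
  then obtain v where v: "v \<in> Ub" and d: "dist (F x u) (F x v) \<le> D" using close by blast
  define y1 y2 where "y1 = F x u" and "y2 = F x v"
  have X: "y1 \<in> X" "y2 \<in> X" using maps u v by (auto simp: y1_def y2_def)
  have "0 \<le> L_R" "0 \<le> L_V" using R_lip Va_lip by (auto simp: lipschitz_on_def)
  then have LD: "L_R * dist y1 y2 \<le> L_R * D" "L_V * dist y1 y2 \<le> L_V * D"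
    using d by (auto simp: y1_def y2_def intro: mult_left_mono)
  have "R y1 \<le> R y2 + L_R * dist y1 y2"
    using lipschitz_onD[OF R_lip X] by (simp add: dist_real_def)
  moreover have "Va y1 \<le> Vb y2 + M + L_V * dist y1 y2"
    using lipschitz_onD[OF Va_lip X] diff[OF X(2)] by (simp add: dist_real_def)
  ultimately have "R y1 + \<gamma> * Va y1 \<le> R y2 + L_R * D + \<gamma> * (Vb y2 + M + L_V * D)"
    using LD mult_left_mono[OF _ \<gamma>] by (smt (verit))
  also have "\<dots> = (R y2 + \<gamma> * Vb y2) + ((L_R + \<gamma> * L_V) * D + \<gamma> * M)"
    by (simp add: algebra_simps)
  also have "R y2 + \<gamma> * Vb y2 \<le> (SUP v\<in>Ub. R (F x v) + \<gamma> * Vb (F x v))"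
    unfolding y2_def using cSUP_upper[OF v bdd] .
  finally show "R (F x u) + \<gamma> * Va (F x u)
      \<le> (SUP v\<in>Ub. R (F x v) + \<gamma> * Vb (F x v)) + ((L_R + \<gamma> * L_V) * D + \<gamma> * M)"
    by (simp add: y1_def)
qed

lemma bellman_fixpoint_diff_le:
  fixes F :: "'x::heine_borel \<Rightarrow> 'u::topological_space \<Rightarrow> 'x"
  assumes X: "bounded X"
    and Ua: "Ua \<noteq> {}" and Ub: "compact Ub" "Ub \<noteq> {}" "continuous_on Ub (F x)"
    and maps: "\<And>u. u \<in> Ua \<union> Ub \<Longrightarrow> F x u \<in> X"
    and R: "bdd_above (R ` X)" "L_R-lipschitz_on X R" and \<gamma>: "0 \<le> \<gamma>"
    and Va_lip: "L_V-lipschitz_on X Va" and Vb_bdd: "bdd_above (Vb ` X)"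
    and fixpoints: "bellman F R \<gamma> Ua Va x = Va x" "bellman F R \<gamma> Ub Vb x = Vb x"
    and diff: "\<And>y. y \<in> X \<Longrightarrow> Va y - Vb y \<le> M"
    and haus: "hausdorff_dist (F x ` Ua) (F x ` Ub) \<le> D"
  shows "Va x - Vb x \<le> (L_R + \<gamma> * L_V) * D + \<gamma> * M"
proof -
  have "bounded (F x ` Ua)" using maps by (intro bounded_subset[OF X]) auto
  then have close: "\<And>u. u \<in> Ua \<Longrightarrow> \<exists>v\<in>Ub. dist (F x u) (F x v) \<le> D"
    using hausdorff_dist_compact_image_witness[OF _ Ub haus] by blast
  have "bdd_above ((\<lambda>v. R (F x v) + \<gamma> * Vb (F x v)) ` Ub)"
    using maps by (intro bellman_summands_bdd_above[OF _ R(1) Vb_bdd \<gamma>]) auto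
  from bellman_le_bellman_close_actions[where F = F and x = x and Vb = Vb,
      OF Ua this close maps R(2) Va_lip \<gamma> diff]
  show ?thesis using fixpoints by simp
qed

theorem lemma1:
  fixes X :: "(real ^ 'n) set"
    and U1 U2 :: "(real ^ 'm) set"
    and F :: "real ^ 'n \<Rightarrow> real ^ 'm \<Rightarrow> real ^ 'n"
    and R :: "real ^ 'n \<Rightarrow> real"
    and V1 V2 :: "real ^ 'n \<Rightarrow> real"
    and L_R L_V \<gamma> :: real
  assumes X: "compact X" "X \<noteq> {}"
    and U1: "compact U1" "U1 \<noteq> {}"
    and U2: "compact U2" "U2 \<noteq> {}"
    and F_cont: "continuous_on (X \<times> (U1 \<union> U2)) (\<lambda>(x, u). F x u)"
    and F_maps: "\<And>x u. x \<in> X \<Longrightarrow> u \<in> U1 \<union> U2 \<Longrightarrow> F x u \<in> X"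
    and R_range: "\<And>x. x \<in> X \<Longrightarrow> R x \<in> {0..1}"
    and R_lip: "L_R-lipschitz_on X R"
    and gamma: "0 \<le> \<gamma>" "\<gamma> < 1"
    and V1_bdd: "bounded (V1 ` X)"
    and V1_fix: "\<And>x. x \<in> X \<Longrightarrow> bellman F R \<gamma> U1 V1 x = V1 x"
    and V2_bdd: "bounded (V2 ` X)"
    and V2_fix: "\<And>x. x \<in> X \<Longrightarrow> bellman F R \<gamma> U2 V2 x = V2 x"
    and V1_lip: "L_V-lipschitz_on X V1"
    and V2_lip: "L_V-lipschitz_on X V2"
  shows "(SUP x\<in>X. \<bar>V1 x - V2 x\<bar>)
           \<le> (L_R + \<gamma> * L_V) / (1 - \<gamma>)
              * (SUP x\<in>X. hausdorff_dist (reachable_set F x U1) (reachable_set F x U2))"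
proof -
  define c where "c = L_R + \<gamma> * L_V"
  define M where "M = (SUP x\<in>X. \<bar>V1 x - V2 x\<bar>)"
  define D where "D = (SUP x\<in>X. hausdorff_dist (F x ` U1) (F x ` U2))"
  have bX: "bounded X" using X(1) by (rule compact_imp_bounded)
  have bdd_R: "bdd_above (R ` X)" using R_range by (intro bdd_aboveI2[where M = 1]) auto
  have bdd_V: "bdd_above (V1 ` X)" "bdd_above (V2 ` X)"
    using V1_bdd V2_bdd by (auto intro: bounded_imp_bdd_above)
  have F_slice: "continuous_on U (F x)" if "x \<in> X" "U \<subseteq> U1 \<union> U2" for x U
    using that by (intro continuous_on_compose2[OF F_cont, of _ "Pair x", simplified])
      (auto intro: continuous_intros)
  have M_upper: "\<bar>V1 y - V2 y\<bar> \<le> M" if "y \<in> X" for y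
  proof -
    obtain B1 B2 where B: "\<forall>y\<in>X. \<bar>V1 y\<bar> \<le> B1" "\<forall>y\<in>X. \<bar>V2 y\<bar> \<le> B2"
      using V1_bdd V2_bdd by (auto simp: bounded_real)
    have "\<bar>V1 y - V2 y\<bar> \<le> B1 + B2" if "y \<in> X" for y
      using abs_triangle_ineq4[of "V1 y" "V2 y"] B that by fastforce
    then have "bdd_above ((\<lambda>x. \<bar>V1 x - V2 x\<bar>) ` X)"
      by (intro bdd_aboveI2)
    then show ?thesis unfolding M_def by (rule cSUP_upper[OF that])
  qed
  have D_upper: "hausdorff_dist (F x ` U1) (F x ` U2) \<le> D" if "x \<in> X" for x
  proof -
    have "hausdorff_dist (F x ` U1) (F x ` U2) \<le> diameter X" if "x \<in> X" for x
      using that F_maps U1(2) U2(2) by (intro hausdorff_dist_le_diameter[OF bX]) auto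
    then have "bdd_above ((\<lambda>x. hausdorff_dist (F x ` U1) (F x ` U2)) ` X)"
      by (intro bdd_aboveI2)
    then show ?thesis unfolding D_def by (rule cSUP_upper[OF that])
  qed
  have "\<bar>V1 x - V2 x\<bar> \<le> c * D + \<gamma> * M" if x: "x \<in> X" for x
  proof -
    have "V1 x - V2 x \<le> c * D + \<gamma> * M"
      unfolding c_def using F_maps[OF x] M_upper D_upper[OF x]
      by (intro bellman_fixpoint_diff_le[where F = F and Vb = V2,
            OF bX U1(2) U2 F_slice[OF x] _ bdd_R R_lip gamma(1) V1_lip bdd_V(2)
            V1_fix[OF x] V2_fix[OF x]]) (auto simp: abs_le_iff)
    moreover have "V2 x - V1 x \<le> c * D + \<gamma> * M"
      unfolding c_def using F_maps[OF x] M_upper D_upper[OF x]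
      by (intro bellman_fixpoint_diff_le[where F = F and Vb = V1,
            OF bX U2(2) U1 F_slice[OF x] _ bdd_R R_lip gamma(1) V2_lip bdd_V(1)
            V2_fix[OF x] V1_fix[OF x]]) (auto simp: abs_le_iff hausdorff_dist_commute)
    ultimately show ?thesis by linarith
  qed
  then have "M \<le> c * D + \<gamma> * M"
    unfolding M_def by (intro cSUP_least[OF X(2)])
  then have "M \<le> c / (1 - \<gamma>) * D"
    using gamma by (simp add: field_simps)
  then show ?thesis
    unfolding M_def D_def c_def by (simp add: reachable_set_def setcompr_eq_image)
qed

end
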